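(* Let $X \subset \mathbb{R}^d$ be a closed set and let $\mu$ be an admissible, $X$-indeterminate measure. If $w$ is a polynomial which is non-negative on $X$ and has only finitely many zeros on $X$, then the measure $w\mu$ is admissible and $X$-indeterminate.
   Context: An admissible measure on a closed set $X \subseteq \mathbb{R}^d$ is a positive Radon measure supported on $X$ with all polynomials integrable. $\mu$ is $X$-indeterminate if some admissible measure on $X$ distinct from $\mu$ has the same integrals against all polynomials. *)

theory Defs
  imports "HOL-Analysis.Analysis"
begin

text \<open>Admissible measure on a closed set X of R^d: a (positive) Radon measure on the Borel
  sets of R^d (locally finite Borel measure), supported on X (X has null complement),
  with every real polynomial integrable.\<close>
definition admissible :: "(real^'n) set \<Rightarrow> (real^'n) measure \<Rightarrow> bool" where
  "admissible X M \<longleftrightarrow>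
     sets M = sets borel \<and>
     (\<forall>K. compact K \<longrightarrow> emeasure M K < \<infinity>) \<and>
     emeasure M (UNIV - X) = 0 \<and>
     (\<forall>p. real_polynomial_function p \<longrightarrow> integrable M p)"

definition X_indeterminate :: "(real^'n) set \<Rightarrow> (real^'n) measure \<Rightarrow> bool" where
  "X_indeterminate X M \<longleftrightarrow>
     (\<exists>N. admissible X N \<and> N \<noteq> M \<and>
          (\<forall>p. real_polynomial_function p \<longrightarrow>
                 integral\<^sup>L N p = integral\<^sup>L M p))"

end

theory Submission
  imports Defs
begin

text \<open>Suppose \<open>N \<noteq> \<mu>\<close> has the moments of \<open>\<mu>\<close>. Then \<open>w N\<close> has the moments of \<open>w \<mu>\<close>, and
  \<open>w N \<noteq> w \<mu>\<close>: otherwise \<open>N\<close> and \<open>\<mu>\<close> agree on \<open>{w > 0}\<close>, so they can only differ by point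
  masses at the finitely many zeros of \<open>w\<close> in \<open>X\<close>, and these masses are detected by
  polynomials vanishing at all but one of the zeros.\<close>

lemma real_polynomial_function_borel_measurable:
  fixes p :: "'a::real_normed_vector \<Rightarrow> real"
  assumes "sets M = sets borel" "real_polynomial_function p"
  shows "p \<in> borel_measurable M"
proof -
  have "continuous_on UNIV p"
    using assms(2) by (simp add: continuous_on_polymonial_function real_polynomial_function_eq)
  then have "p \<in> borel_measurable borel"
    by (rule borel_measurable_continuous_onI)
  then show ?thesis
    using measurable_cong_sets[OF assms(1), of borel borel] by metis
qed

lemma real_polynomial_function_interpolate_point:
  fixes Z :: "'a::real_inner set"
  assumes "finite Z" "z0 \<in> Z"
  obtains q where "real_polynomial_function q" "q z0 = 1" "\<And>z. z \<in> Z - {z0} \<Longrightarrow> q z = 0"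
proof
  define q where "q x = (\<Prod>z\<in>Z - {z0}. ((x - z) \<bullet> (z0 - z)) / ((z0 - z) \<bullet> (z0 - z)))" for x
  have affine: "real_polynomial_function (\<lambda>x. (x - z) \<bullet> c)" for z c :: 'a
  proof -
    have "real_polynomial_function (\<lambda>x. x \<bullet> c - z \<bullet> c)"
      by (intro real_polynomial_function_diff real_polynomial_function.intros(1,2)
          bounded_linear_inner_left)
    then show ?thesis by (simp add: inner_diff_left)
  qed
  show "real_polynomial_function q"
    unfolding q_def by (intro real_polynomial_function_prod real_polynomial_function_divide affine)
      (use assms in auto)
  show "q z0 = 1"
    unfolding q_def by (rule prod.neutral) auto
  show "q z = 0" if "z \<in> Z - {z0}" for z
    unfolding q_def using that assms(1) by (intro prod_zero) (auto intro!: bexI[of _ z])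
qed

lemma emeasure_split_finite_part:
  assumes "AE x in M. x \<in> S \<or> x \<in> Z" "S \<in> sets M" "A \<in> sets M" "finite Z" "Z \<inter> S = {}"
    and "\<And>z. z \<in> Z \<Longrightarrow> {z} \<in> sets M"
  shows "emeasure M A = emeasure M (S \<inter> A) + (\<Sum>z\<in>Z \<inter> A. emeasure M {z})"
proof -
  have "Z \<inter> A = (\<Union>z\<in>Z \<inter> A. {z})" by auto
  also have "\<dots> \<in> sets M"
    using assms(4,6) by (intro sets.finite_UN) auto
  finally have ZA: "Z \<inter> A \<in> sets M" .
  have "emeasure M A = emeasure M (S \<inter> A) + emeasure M (A - S)"
    using assms(2,3) by (subst plus_emeasure) (auto intro!: arg_cong[where f = "emeasure M"])
  also have "emeasure M (A - S) = emeasure M (Z \<inter> A)"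
    by (rule emeasure_eq_AE) (use assms(1,2,3,5) ZA in auto)
  also have "\<dots> = (\<Sum>z\<in>Z \<inter> A. emeasure M {z})"
    by (rule emeasure_eq_sum_singleton) (use assms(4,6) in auto)
  finally show ?thesis .
qed

lemma integral_split_finite_part:
  fixes f :: "'a \<Rightarrow> real"
  assumes "AE x in M. x \<in> S \<or> x \<in> Z" "S \<in> sets M" "finite Z" "Z \<inter> S = {}"
    and "\<And>z. z \<in> Z \<Longrightarrow> {z} \<in> sets M" "\<And>z. z \<in> Z \<Longrightarrow> emeasure M {z} < \<infinity>"
    and "integrable M f"
  shows "integral\<^sup>L M f = (LINT x|M. indicator S x * f x) + (\<Sum>z\<in>Z. f z * measure M {z})"
proof -
  have decomposition: "AE x in M. f x = indicator S x * f x + (\<Sum>z\<in>Z. indicator {z} x * f z)"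
    using assms(1)
  proof eventually_elim
    case (elim x)
    have "(\<Sum>z\<in>Z. indicator {z} x * f z) = (\<Sum>z\<in>Z. if z = x then f x else 0)"
      by (rule sum.cong) (auto simp: indicator_def)
    then show ?case
      using elim assms(3,4) by (auto simp: indicator_def)
  qed
  have "integral\<^sup>L M f
      = integral\<^sup>L M (\<lambda>x. indicator S x * f x + (\<Sum>z\<in>Z. indicator {z} x * f z))"
    by (rule integral_cong_AE[OF _ _ decomposition])
      (use assms(2,5,7) in \<open>auto intro!: borel_measurable_sum borel_measurable_times
        borel_measurable_indicator borel_measurable_integrable\<close>)
  also have "\<dots> = (LINT x|M. indicator S x * f x) + (\<Sum>z\<in>Z. f z * measure M {z})"
  proof -
    have "integrable M (\<lambda>x. indicator S x * f x)"
      using integrable_real_mult_indicator[OF assms(2,7)] by (simp add: mult_ac)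
    moreover have "integrable M (\<lambda>x. indicator {z} x * f z)" if "z \<in> Z" for z
      using integrable_real_indicator[OF assms(5,6)[OF that]] by simp
    ultimately show ?thesis
      by (simp add: integral_add integral_sum assms(5) mult.commute)
  qed
  finally show ?thesis .
qed

lemma density_indicator_positive_eq:
  fixes w :: "'a \<Rightarrow> real"
  assumes "w \<in> borel_measurable M" "w \<in> borel_measurable N"
    and "{x. 0 < w x} \<in> sets M" "{x. 0 < w x} \<in> sets N"
    and "AE x in M. 0 \<le> w x" "AE x in N. 0 \<le> w x"
    and "density N (\<lambda>x. ennreal (w x)) = density M (\<lambda>x. ennreal (w x))"
  shows "density N (indicator {x. 0 < w x}) = density M (indicator {x. 0 < w x})"
proof -
  have via_weight: "density L (indicator {x. 0 < w x}) = density (density L (\<lambda>x. ennreal (w x)))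
      (\<lambda>x. ennreal (indicator {x. 0 < w x} x / w x))"
    if "w \<in> borel_measurable L" "{x. 0 < w x} \<in> sets L" "AE x in L. 0 \<le> w x" for L
    using that by (subst density_density_divide) (auto simp: ennreal_indicator split: split_indicator)
  show ?thesis
    using via_weight[OF assms(1,3,5)] via_weight[OF assms(2,4,6)] assms(7) by simp
qed

lemma admissible_sets: "admissible X M \<Longrightarrow> sets M = sets borel"
  by (simp add: admissible_def)

lemma admissible_emeasure_singleton_finite: "admissible X M \<Longrightarrow> emeasure M {z} < \<infinity>"
  using compact_sing unfolding admissible_def by blast

lemma admissible_integrable:
  "admissible X M \<Longrightarrow> real_polynomial_function p \<Longrightarrow> integrable M p"
  by (simp add: admissible_def)

lemma admissible_AE_mem:
  assumes "closed X" "admissible X M"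
  shows "AE x in M. x \<in> X"
proof (rule AE_I'[of "UNIV - X"])
  show "UNIV - X \<in> null_sets M"
    using assms by (intro null_setsI) (auto simp: admissible_def)
qed auto

lemma admissible_density:
  fixes X :: "(real^'n) set" and w :: "real^'n \<Rightarrow> real"
  assumes "closed X" "admissible X M" "real_polynomial_function w" "\<forall>x\<in>X. 0 \<le> w x"
  shows "admissible X (density M (\<lambda>x. ennreal (w x)))"
proof -
  have sets: "sets M = sets borel"
    by (rule admissible_sets[OF assms(2)])
  note moments = admissible_integrable[OF assms(2)]
  have [measurable]: "w \<in> borel_measurable M"
    by (rule real_polynomial_function_borel_measurable[OF sets assms(3)])
  have AE_X: "AE x in M. x \<in> X"
    by (rule admissible_AE_mem[OF assms(1,2)])
  have "emeasure (density M (\<lambda>x. ennreal (w x))) K < \<infinity>" if "K \<in> sets M" for K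
  proof -
    have "emeasure (density M (\<lambda>x. ennreal (w x))) K = (\<integral>\<^sup>+ x. ennreal (w x) * indicator K x \<partial>M)"
      using that by (simp add: emeasure_density)
    also have "\<dots> \<le> (\<integral>\<^sup>+ x. ennreal (norm (w x)) \<partial>M)"
      by (intro nn_integral_mono) (auto simp: indicator_def intro: ennreal_leI)
    also have "\<dots> < \<infinity>"
      using moments[OF assms(3)] by (simp add: integrable_iff_bounded)
    finally show ?thesis .
  qed
  then have "\<forall>K. compact K \<longrightarrow> emeasure (density M (\<lambda>x. ennreal (w x))) K < \<infinity>"
    using sets by (auto intro: borel_compact)
  moreover have "emeasure (density M (\<lambda>x. ennreal (w x))) (UNIV - X) = 0"
  proof -
    have "emeasure (density M (\<lambda>x. ennreal (w x))) (UNIV - X)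
        = (\<integral>\<^sup>+ x. ennreal (w x) * indicator (UNIV - X) x \<partial>M)"
      using sets assms(1) by (simp add: emeasure_density)
    also have "\<dots> = (\<integral>\<^sup>+ x. 0 \<partial>M)"
      by (rule nn_integral_cong_AE) (use AE_X in auto)
    finally show ?thesis by simp
  qed
  moreover have "integrable (density M (\<lambda>x. ennreal (w x))) p" if "real_polynomial_function p" for p
  proof -
    have [measurable]: "p \<in> borel_measurable M"
      by (rule real_polynomial_function_borel_measurable[OF sets that])
    have "integrable M (\<lambda>x. w x *\<^sub>R p x)"
      using moments[of "\<lambda>x. w x * p x"] that assms(3) by auto
    then show ?thesis
      by (subst integrable_density) (use AE_X assms(4) in auto)
  qed
  ultimately show ?thesis
    using sets by (auto simp: admissible_def)
qed

lemma integral_density_admissible: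
  fixes X :: "(real^'n) set" and w p :: "real^'n \<Rightarrow> real"
  assumes "closed X" "admissible X M" "\<forall>x\<in>X. 0 \<le> w x"
    and "real_polynomial_function w" "real_polynomial_function p"
  shows "integral\<^sup>L (density M (\<lambda>x. ennreal (w x))) p = integral\<^sup>L M (\<lambda>x. w x * p x)"
proof -
  have [measurable]: "w \<in> borel_measurable M" "p \<in> borel_measurable M"
    using real_polynomial_function_borel_measurable[OF admissible_sets[OF assms(2)]] assms(4,5)
    by auto
  have "AE x in M. 0 \<le> w x"
    using admissible_AE_mem[OF assms(1,2)] assms(3) by auto
  then show ?thesis
    by (subst integral_density) auto
qed

lemma admissible_point_mass_eq:
  fixes X S Z :: "(real^'n) set"
  assumes "admissible X M" "admissible X N"
    and "AE x in M. x \<in> S \<or> x \<in> Z" "AE x in N. x \<in> S \<or> x \<in> Z"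
    and "S \<in> sets borel" "finite Z" "Z \<inter> S = {}" "z0 \<in> Z"
    and "density N (indicator S) = density M (indicator S)"
    and "\<And>p. real_polynomial_function p \<Longrightarrow> integral\<^sup>L N p = integral\<^sup>L M p"
  shows "measure N {z0} = measure M {z0}"
proof -
  obtain q where q: "real_polynomial_function q" "q z0 = 1" "\<And>z. z \<in> Z - {z0} \<Longrightarrow> q z = 0"
    using real_polynomial_function_interpolate_point[OF assms(6,8)] by blast
  have integral_q: "integral\<^sup>L L q = (LINT x|density L (indicator S). q x) + measure L {z0}"
    if "admissible X L" "AE x in L. x \<in> S \<or> x \<in> Z" for L
  proof -
    have sets: "sets L = sets borel"
      by (rule admissible_sets[OF that(1)])
    have [measurable]: "q \<in> borel_measurable L"
      by (rule real_polynomial_function_borel_measurable[OF sets q(1)])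
    have "(\<Sum>z\<in>Z. q z * measure L {z}) = measure L {z0}"
      using assms(6,8) q(2,3) by (simp add: sum.remove)
    moreover have "(LINT x|density L (indicator S). q x) = (LINT x|L. indicator S x * q x)"
      using integral_density[of q L "indicator S"] assms(5) sets by (simp add: ennreal_indicator)
    ultimately show ?thesis
      using integral_split_finite_part[OF that(2) _ assms(6,7)] assms(5) sets
        admissible_emeasure_singleton_finite[OF that(1)] admissible_integrable[OF that(1) q(1)]
      by simp
  qed
  show ?thesis
    using integral_q[OF assms(1,3)] integral_q[OF assms(2,4)] assms(9) assms(10)[OF q(1)] by simp
qed

lemma admissible_eq_if_density_eq:
  fixes X :: "(real^'n) set" and w :: "real^'n \<Rightarrow> real"
  assumes "closed X" "admissible X M" "admissible X N"
    and "real_polynomial_function w" "\<forall>x\<in>X. 0 \<le> w x" "finite {x\<in>X. w x = 0}"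
    and moments: "\<And>p. real_polynomial_function p \<Longrightarrow> integral\<^sup>L N p = integral\<^sup>L M p"
    and "density N (\<lambda>x. ennreal (w x)) = density M (\<lambda>x. ennreal (w x))"
  shows "N = M"
proof -
  define S where "S = {x. 0 < w x}"
  define Z where "Z = {x\<in>X. w x = 0}"
  have sets: "sets M = sets borel" "sets N = sets borel"
    using admissible_sets assms(2,3) by blast+
  have [measurable]: "w \<in> borel_measurable borel"
    by (rule real_polynomial_function_borel_measurable[OF refl assms(4)])
  have "S = {x \<in> space borel. 0 < w x}"
    by (simp add: S_def)
  also have "\<dots> \<in> sets borel"
    by measurable
  finally have S_borel: "S \<in> sets borel" .
  have "finite Z" "Z \<inter> S = {}"
    using assms(6) by (auto simp: S_def Z_def)
  have AE_S_Z: "AE x in L. x \<in> S \<or> x \<in> Z" if "admissible X L" for L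
    using admissible_AE_mem[OF assms(1) that]
    by eventually_elim (use assms(5) in \<open>auto simp: S_def Z_def\<close>)
  have AE_nonneg: "AE x in L. 0 \<le> w x" if "admissible X L" for L
    using admissible_AE_mem[OF assms(1) that] by eventually_elim (use assms(5) in auto)
  have restricted_eq: "density N (indicator S) = density M (indicator S)"
    using density_indicator_positive_eq[OF
        real_polynomial_function_borel_measurable[OF sets(1) assms(4)]
        real_polynomial_function_borel_measurable[OF sets(2) assms(4)] _ _
        AE_nonneg[OF assms(2)] AE_nonneg[OF assms(3)] assms(8)] S_borel sets
    unfolding S_def by simp
  show "N = M"
  proof (rule measure_eqI)
    show "sets N = sets M" using sets by simp
    fix A assume A: "A \<in> sets N"
    have "(\<Sum>z\<in>Z \<inter> A. emeasure N {z}) = (\<Sum>z\<in>Z \<inter> A. emeasure M {z})"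
    proof (rule sum.cong[OF refl])
      fix z assume "z \<in> Z \<inter> A"
      then show "emeasure N {z} = emeasure M {z}"
        using admissible_point_mass_eq[OF assms(2,3) AE_S_Z[OF assms(2)] AE_S_Z[OF assms(3)]
            S_borel \<open>finite Z\<close> \<open>Z \<inter> S = {}\<close> _ restricted_eq moments, of z]
          emeasure_eq_ennreal_measure[of N "{z}"] emeasure_eq_ennreal_measure[of M "{z}"]
          admissible_emeasure_singleton_finite[OF assms(2), of z]
          admissible_emeasure_singleton_finite[OF assms(3), of z]
        by simp
    qed
    moreover have "emeasure N (S \<inter> A) = emeasure M (S \<inter> A)"
      using emeasure_restricted[of S N A] emeasure_restricted[of S M A] restricted_eq A sets S_borel
      by simp
    ultimately show "emeasure N A = emeasure M A"
      using emeasure_split_finite_part[OF AE_S_Z[OF assms(3)] _ A \<open>finite Z\<close> \<open>Z \<inter> S = {}\<close>]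
        emeasure_split_finite_part[OF AE_S_Z[OF assms(2)] _ _ \<open>finite Z\<close> \<open>Z \<inter> S = {}\<close>, of A]
        A sets S_borel by simp
  qed
qed

theorem proposition5p2:
  fixes X :: "(real^'n) set" and \<mu> :: "(real^'n) measure" and w :: "real^'n \<Rightarrow> real"
  assumes "closed X"
    and "admissible X \<mu>"
    and "X_indeterminate X \<mu>"
    and "real_polynomial_function w"
    and "\<forall>x\<in>X. w x \<ge> 0"
    and "finite {x\<in>X. w x = 0}"
  shows "admissible X (density \<mu> (\<lambda>x. ennreal (w x))) \<and>
         X_indeterminate X (density \<mu> (\<lambda>x. ennreal (w x)))"
proof
  show "admissible X (density \<mu> (\<lambda>x. ennreal (w x)))"
    using admissible_density assms by blast
  obtain N where N: "admissible X N" "N \<noteq> \<mu>"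
    and moments: "\<And>p. real_polynomial_function p \<Longrightarrow> integral\<^sup>L N p = integral\<^sup>L \<mu> p"
    using assms(3) unfolding X_indeterminate_def by blast
  have "integral\<^sup>L (density N (\<lambda>x. ennreal (w x))) p = integral\<^sup>L (density \<mu> (\<lambda>x. ennreal (w x))) p"
    if "real_polynomial_function p" for p
    using integral_density_admissible[OF assms(1) N(1) assms(5,4) that]
      integral_density_admissible[OF assms(1,2,5,4) that] moments[of "\<lambda>x. w x * p x"]
      that assms(4) by auto
  moreover have "density N (\<lambda>x. ennreal (w x)) \<noteq> density \<mu> (\<lambda>x. ennreal (w x))"
    using admissible_eq_if_density_eq[OF assms(1,2) N(1) assms(4,5,6) moments] N(2) by blast
  moreover have "admissible X (density N (\<lambda>x. ennreal (w x)))"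
    using admissible_density assms N(1) by blast
  ultimately show "X_indeterminate X (density \<mu> (\<lambda>x. ennreal (w x)))"
    unfolding X_indeterminate_def by blast
qed

end
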